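(* Let $n\ge2$ and let $B_1,\dots,B_n$ be points in the plane with $B_i\ne B_{i+1}$ for all $i$ (indices mod $n$). Let $\varphi_i$ be the direction of the side $B_iB_{i+1}$ and $\theta_i=\varphi_i-\varphi_{i-1}$ the exterior angle at $B_i$. If $n$ is odd, the polygon has a unique framing. If $n$ is even, the polygon admits a framing if and only if $$\sum_{i\ \mathrm{odd}}\theta_i\equiv\sum_{i\ \mathrm{even}}\theta_i\equiv 0 \pmod{\pi},$$ in which case there is a one-parameter family of framings.
   Context: For nonzero plane vectors $u,v$, $\angle(u,v)\in\mathbb{R}/2\pi\mathbb{Z}$ is the angle through which $u$ must be rotated counterclockwise to align with $v$. A framing of the polygon $B_1,\dots,B_n$ is an assignment of unit vectors $u_1,\dots,u_n$ to its vertices such that $\angle(u_i,B_{i+1}-B_i)=\angle(B_{i+1}-B_i,u_{i+1})$ for all $i$ (indices mod $n$). Framings $(u_i)$ and $(-u_i)$ are identified (so uniqueness is up to this involution). *)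

theory Defs
  imports "HOL-Analysis.Analysis"
begin

text \<open>Polygon vertices B 0, ..., B (n-1) (0-based; indices mod n).
  The angle in R/2piZ through which u must be rotated counterclockwise to align with v
  is represented by its canonical representative Arg (v / u) in (-pi, pi].\<close>

definition ang :: "complex \<Rightarrow> complex \<Rightarrow> real" where
  "ang u v = Arg (v / u)"

definition side :: "nat \<Rightarrow> (nat \<Rightarrow> complex) \<Rightarrow> nat \<Rightarrow> complex" where
  "side n B i = B (Suc i mod n) - B i"

definition framing :: "nat \<Rightarrow> (nat \<Rightarrow> complex) \<Rightarrow> (nat \<Rightarrow> complex) \<Rightarrow> bool" where
  "framing n B u \<longleftrightarrow>
     (\<forall>i<n. norm (u i) = 1) \<and>
     (\<forall>i<n. ang (u i) (side n B i) = ang (side n B i) (u (Suc i mod n)))"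

text \<open>Direction phi_i of side B_i B_{i+1}, and exterior angle theta_i = phi_i - phi_{i-1}
  (a real representative; only its class mod 2pi matters for the mod-pi condition).\<close>
definition dir :: "nat \<Rightarrow> (nat \<Rightarrow> complex) \<Rightarrow> nat \<Rightarrow> real" where
  "dir n B i = Arg (side n B i)"

definition ext_angle :: "nat \<Rightarrow> (nat \<Rightarrow> complex) \<Rightarrow> nat \<Rightarrow> real" where
  "ext_angle n B i = dir n B i - dir n B ((i + n - 1) mod n)"

end

theory Submission
  imports Defs "HOL-Library.Real_Mod"
begin

text \<open>The framing condition on the side \<open>s\<^sub>i = B\<^sub>i\<^sub>+\<^sub>1 - B\<^sub>i\<close> says exactly that
  \<open>u\<^sub>i\<^sub>+\<^sub>1\<close> is the mirror image of \<open>u\<^sub>i\<close> in the line \<open>\<real> s\<^sub>i\<close>. Hence a framing is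
  determined by \<open>u\<^sub>0\<close>, and it exists iff the composite of the \<open>n\<close> reflections fixes \<open>u\<^sub>0\<close>.
  For odd \<open>n\<close> the composite is again a reflection \<open>z \<mapsto> P cnj z\<close>, whose unit fixed
  points are the two square roots of \<open>P\<close>. For even \<open>n\<close> it is the rotation by
  \<open>2 (\<phi>\<^sub>n\<^sub>-\<^sub>1 - \<phi>\<^sub>n\<^sub>-\<^sub>2 + \<dots> - \<phi>\<^sub>0)\<close>, i.e. by twice the sum of the odd-indexed
  exterior angles; it fixes one unit vector iff it fixes all of them iff that sum is a multiple
  of \<open>\<pi>\<close>. The even-indexed sum is the negative of the odd-indexed one, since all exterior
  angles add up to zero.\<close>

lemma Arg_eq_Arg_iff_sgn_eq:
  assumes "a \<noteq> 0" "b \<noteq> 0"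
  shows "Arg a = Arg b \<longleftrightarrow> sgn a = sgn b"
proof
  show "sgn a = sgn b" if "Arg a = Arg b" using that assms by (metis cis_Arg)
  show "Arg a = Arg b" if "sgn a = sgn b" using that assms
    by (metis cis_Arg cis_Arg_unique Arg_le_pi mpi_less_Arg)
qed

lemma cnj_eq_inverse_if_norm_1:
  fixes u :: complex
  assumes "norm u = 1"
  shows "cnj u = inverse u"
proof -
  have "u * cnj u = 1" using complex_norm_square[of u] assms by simp
  then show ?thesis by (simp add: inverse_unique)
qed

definition mirror :: "complex \<Rightarrow> complex \<Rightarrow> complex" where
  "mirror s z = sgn s ^ 2 * cnj z"

lemma sgn_power2_eq_cis: "s \<noteq> 0 \<Longrightarrow> sgn s ^ 2 = cis (2 * Arg s)"
  using Complex.DeMoivre[of "Arg s" 2] by (simp add: cis_Arg)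

lemma norm_mirror: "s \<noteq> 0 \<Longrightarrow> norm (mirror s z) = norm z"
  by (simp add: mirror_def norm_mult norm_power norm_sgn)

lemma Arg_div_eq_Arg_div_iff_mirror:
  assumes "norm u = 1" "norm v = 1" "s \<noteq> 0"
  shows "Arg (s / u) = Arg (v / s) \<longleftrightarrow> v = mirror s u"
proof -
  have u: "u \<noteq> 0" "sgn u = u" "cnj u = inverse u"
    using assms(1) cnj_eq_inverse_if_norm_1 by (auto simp: sgn_eq)
  have v: "v \<noteq> 0" "sgn v = v" using assms(2) by (auto simp: sgn_eq)
  have "Arg (s / u) = Arg (v / s) \<longleftrightarrow> sgn s / u = v / sgn s"
    using assms(3) u v by (simp add: Arg_eq_Arg_iff_sgn_eq)
  also have "\<dots> \<longleftrightarrow> v = mirror s u"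
    unfolding mirror_def u(3) using assms(3) u(1)
    by (auto simp: field_simps power2_eq_square sgn_zero_iff)
  finally show ?thesis .
qed

fun mirror_iter :: "(nat \<Rightarrow> complex) \<Rightarrow> complex \<Rightarrow> nat \<Rightarrow> complex" where
  "mirror_iter s z 0 = z"
| "mirror_iter s z (Suc k) = mirror (s k) (mirror_iter s z k)"

lemma mirror_iter_eq: "mirror_iter s z k = mirror_iter s 1 k * (if even k then z else cnj z)"
  by (induction k) (auto simp: mirror_def)

lemma mirror_iter_uminus: "mirror_iter s (- z) k = - mirror_iter s z k"
  by (induction k) (auto simp: mirror_def)

lemma norm_mirror_iter:
  "(\<And>j. j < k \<Longrightarrow> s j \<noteq> 0) \<Longrightarrow> norm (mirror_iter s z k) = norm z"
  by (induction k) (auto simp: norm_mirror)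

lemma cyclic_mirror_iff:
  assumes "0 < n"
  shows "(\<forall>i<n. u (Suc i mod n) = mirror (s i) (u i)) \<longleftrightarrow>
         (\<forall>i<n. u i = mirror_iter s (u 0) i) \<and> mirror_iter s (u 0) n = u 0"
proof safe
  assume step: "\<forall>i<n. u (Suc i mod n) = mirror (s i) (u i)"
  have iter: "u i = mirror_iter s (u 0) i" if "i < n" for i
    using that
  proof (induction i)
    case (Suc i)
    then have "u (Suc i mod n) = mirror (s i) (u i)" using step Suc_lessD by blast
    with Suc show ?case by simp
  qed simp
  then show "u i = mirror_iter s (u 0) i" if "i < n" for i using that .
  obtain k where k: "n = Suc k" using assms by (cases n) auto
  then show "mirror_iter s (u 0) n = u 0"
    using step iter[of k] by auto
next
  assume iter: "\<forall>i<n. u i = mirror_iter s (u 0) i" and closed: "mirror_iter s (u 0) n = u 0"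
  show "u (Suc i mod n) = mirror (s i) (u i)" if "i < n" for i
  proof -
    have "u (Suc i mod n) = mirror_iter s (u 0) (Suc i)"
    proof (cases "Suc i = n")
      case True
      then show ?thesis using closed by simp
    next
      case False
      then show ?thesis using iter[rule_format, of "Suc i"] that by simp
    qed
    then show ?thesis by (simp add: iter[rule_format, OF that])
  qed
qed

fun alt_sum :: "(nat \<Rightarrow> real) \<Rightarrow> nat \<Rightarrow> real" where
  "alt_sum f 0 = 0"
| "alt_sum f (Suc k) = f k - alt_sum f k"

lemma alt_sum_double: "alt_sum f (2 * m) = (\<Sum>j<m. f (2 * j + 1) - f (2 * j))"
  by (induction m) (simp_all add: algebra_simps)

lemma mirror_iter_one_eq_cis:
  assumes "\<And>j. j < k \<Longrightarrow> s j \<noteq> 0"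
  shows "mirror_iter s 1 k = cis (2 * alt_sum (\<lambda>j. Arg (s j)) k)"
  using assms
  by (induction k) (simp_all add: mirror_def sgn_power2_eq_cis cis_cnj cis_mult algebra_simps)

lemma cis_double_eq_1_iff: "cis (2 * a) = 1 \<longleftrightarrow> (\<exists>k::int. a = of_int k * pi)"
  by (auto simp: cis_eq_1_iff)

lemma sum_rotate_mod:
  fixes g :: "nat \<Rightarrow> 'a::comm_monoid_add"
  assumes "0 < n"
  shows "(\<Sum>i<n. g ((i + n - 1) mod n)) = (\<Sum>i<n. g i)"
proof -
  have pred: "(i + n - 1) mod n = (if i = 0 then n - 1 else i - 1)" if "i < n" for i
    using that assms by (cases i) auto
  show ?thesis
    by (rule sum.reindex_bij_witness[where i = "\<lambda>i. Suc i mod n" and j = "\<lambda>i. (i + n - 1) mod n"])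
    (use assms pred in \<open>auto simp: mod_Suc\<close>)
qed

locale polygon =
  fixes n :: nat and B :: "nat \<Rightarrow> complex"
  assumes n_pos: "0 < n"
    and side_nonzero: "i < n \<Longrightarrow> side n B i \<noteq> 0"
begin

abbreviation frame :: "complex \<Rightarrow> nat \<Rightarrow> complex" where
  "frame z \<equiv> mirror_iter (side n B) z"

abbreviation holonomy :: complex where
  "holonomy \<equiv> frame 1 n"

lemma framing_iff_mirror:
  "framing n B u \<longleftrightarrow>
     (\<forall>i<n. norm (u i) = 1) \<and> (\<forall>i<n. u (Suc i mod n) = mirror (side n B i) (u i))"
proof -
  have "ang (u i) (side n B i) = ang (side n B i) (u (Suc i mod n)) \<longleftrightarrow>
          u (Suc i mod n) = mirror (side n B i) (u i)"
    if "\<forall>i<n. norm (u i) = 1" "i < n" for i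
    using that n_pos side_nonzero Arg_div_eq_Arg_div_iff_mirror unfolding ang_def by simp
  then show ?thesis unfolding framing_def by blast
qed

lemma framing_iff_frame:
  "framing n B u \<longleftrightarrow> norm (u 0) = 1 \<and> frame (u 0) n = u 0 \<and> (\<forall>i<n. u i = frame (u 0) i)"
proof -
  have "(\<forall>i<n. norm (u i) = 1) \<longleftrightarrow> norm (u 0) = 1" if frame: "\<forall>i<n. u i = frame (u 0) i"
  proof
    show "norm (u 0) = 1" if "\<forall>i<n. norm (u i) = 1" using that n_pos by blast
  next
    assume norm_u0: "norm (u 0) = 1"
    show "\<forall>i<n. norm (u i) = 1"
    proof (intro allI impI)
      fix i assume "i < n"
      then show "norm (u i) = 1"
        using frame[rule_format, OF \<open>i < n\<close>] norm_mirror_iter[of i "side n B" "u 0"]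
          side_nonzero norm_u0 by simp
    qed
  qed
  then show ?thesis
    unfolding framing_iff_mirror cyclic_mirror_iff[OF n_pos] by blast
qed

lemma framing_frame: "framing n B (frame z) \<longleftrightarrow> norm z = 1 \<and> frame z n = z"
  by (simp add: framing_iff_frame)

text \<open>As a rewrite rule the conclusion loops at \<open>i = 0\<close>; it is therefore only instantiated
  explicitly below.\<close>

lemma framing_eq_frame: "framing n B v \<Longrightarrow> \<forall>i<n. v i = frame (v 0) i"
  using framing_iff_frame[of v] by argo

lemma framing_closes: "framing n B v \<Longrightarrow> norm (v 0) = 1 \<and> frame (v 0) n = v 0"
  using framing_iff_frame[of v] by argo

lemma norm_holonomy: "norm holonomy = 1"
  using norm_mirror_iter[of n "side n B" 1] side_nonzero by simp

lemma holonomy_eq_cis: "holonomy = cis (2 * alt_sum (dir n B) n)"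
  using mirror_iter_one_eq_cis[of n "side n B"] side_nonzero by (simp add: dir_def [abs_def])

lemma frame_closes_iff_odd:
  assumes "odd n" "norm z = 1"
  shows "frame z n = z \<longleftrightarrow> z ^ 2 = holonomy"
proof -
  have "z \<noteq> 0" using assms(2) by auto
  then have "holonomy * cnj z = z \<longleftrightarrow> z ^ 2 = holonomy"
    unfolding cnj_eq_inverse_if_norm_1[OF assms(2)] by (auto simp: power2_eq_square field_simps)
  then show ?thesis
    using assms(1) by (subst mirror_iter_eq) simp
qed

lemma frame_closes_iff_even:
  assumes "even n" "z \<noteq> 0"
  shows "frame z n = z \<longleftrightarrow> holonomy = 1"
  using assms by (subst mirror_iter_eq) simp

lemma framing_odd_unique:
  assumes "odd n"
  shows "\<exists>u. framing n B u \<and> (\<forall>v. framing n B v \<longrightarrow> (\<forall>i<n. v i = u i) \<or> (\<forall>i<n. v i = - u i))"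
proof (intro exI conjI allI impI)
  define z where "z = csqrt holonomy"
  have z: "norm z = 1" "z ^ 2 = holonomy"
    using norm_holonomy by (simp_all add: z_def)
  then show "framing n B (frame z)"
    using framing_frame frame_closes_iff_odd[OF assms] by blast
  fix v assume v: "framing n B v"
  then have "norm (v 0) = 1" "frame (v 0) n = v 0"
    using framing_closes by blast+
  then have "v 0 ^ 2 = z ^ 2"
    using z frame_closes_iff_odd[OF assms] by simp
  then consider "v 0 = z" | "v 0 = - z" by (auto simp: power2_eq_iff)
  moreover note v_frame = framing_eq_frame[OF v]
  ultimately show "(\<forall>i<n. v i = frame z i) \<or> (\<forall>i<n. v i = - frame z i)"
  proof cases
    case 1
    show ?thesis using v_frame[unfolded 1] by (rule disjI1)
  next
    case 2
    show ?thesis using v_frame[unfolded 2 mirror_iter_uminus] by (rule disjI2)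
  qed
qed

lemma framing_exists_iff_even:
  assumes "even n"
  shows "(\<exists>u. framing n B u) \<longleftrightarrow> holonomy = 1"
proof
  assume "\<exists>u. framing n B u"
  then obtain u where "framing n B u" ..
  then have norm_u0: "norm (u 0) = 1" and closes: "frame (u 0) n = u 0"
    using framing_closes by blast+
  from norm_u0 have "u 0 \<noteq> 0" by auto
  show "holonomy = 1"
    using frame_closes_iff_even[OF assms \<open>u 0 \<noteq> 0\<close>] closes by (rule iffD1)
next
  assume "holonomy = 1"
  then have "framing n B (frame 1)"
    by (simp add: framing_frame)
  then show "\<exists>u. framing n B u" by blast
qed

lemma framing_even_unique:
  assumes "even n" "holonomy = 1" "norm z = 1"
  shows "\<exists>u. framing n B u \<and> u 0 = z \<and> (\<forall>v. framing n B v \<and> v 0 = z \<longrightarrow> (\<forall>i<n. v i = u i))"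
proof (intro exI conjI allI impI)
  have "z \<noteq> 0" using assms(3) by auto
  then have "frame z n = z"
    using frame_closes_iff_even[OF assms(1)] assms(2) by blast
  then show "framing n B (frame z)"
    using assms(3) framing_frame by blast
next
  fix v i assume v: "framing n B v \<and> v 0 = z" and "i < n"
  show "v i = frame z i"
    using framing_eq_frame[OF conjunct1[OF v], unfolded conjunct2[OF v], rule_format, OF \<open>i < n\<close>]
    .
qed simp

lemma sum_ext_angle: "(\<Sum>i<n. ext_angle n B i) = 0"
  using sum_rotate_mod[OF n_pos, of "dir n B"] by (simp add: ext_angle_def sum_subtractf)

lemma sum_odd_ext_angle:
  assumes "n = 2 * m"
  shows "(\<Sum>i\<in>{i. i < n \<and> odd i}. ext_angle n B i) = alt_sum (dir n B) n"
proof -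
  have odd_set: "{i. i < n \<and> odd i} = (\<lambda>j. 2 * j + 1) ` {..<m}"
    using assms by (auto elim!: oddE)
  have "(\<Sum>i\<in>{i. i < n \<and> odd i}. ext_angle n B i) = (\<Sum>j<m. ext_angle n B (2 * j + 1))"
    unfolding odd_set by (subst sum.reindex) (auto simp: inj_on_def)
  also have "\<dots> = (\<Sum>j<m. dir n B (2 * j + 1) - dir n B (2 * j))"
    using assms by (intro sum.cong) (auto simp: ext_angle_def)
  finally show ?thesis using assms by (simp add: alt_sum_double)
qed

lemma sum_even_ext_angle:
  "(\<Sum>i\<in>{i. i < n \<and> even i}. ext_angle n B i) = - (\<Sum>i\<in>{i. i < n \<and> odd i}. ext_angle n B i)"
proof -
  have parts: "{..<n} = {i. i < n \<and> odd i} \<union> {i. i < n \<and> even i}" by auto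
  have "(\<Sum>i<n. ext_angle n B i) =
      (\<Sum>i\<in>{i. i < n \<and> odd i}. ext_angle n B i) + (\<Sum>i\<in>{i. i < n \<and> even i}. ext_angle n B i)"
    unfolding parts by (rule sum.union_disjoint) auto
  then show ?thesis using sum_ext_angle by simp
qed

lemma holonomy_eq_1_iff_even:
  assumes "even n"
  shows "holonomy = 1 \<longleftrightarrow>
           (\<exists>k::int. (\<Sum>i\<in>{i. i < n \<and> odd i}. ext_angle n B i) = of_int k * pi) \<and>
           (\<exists>k::int. (\<Sum>i\<in>{i. i < n \<and> even i}. ext_angle n B i) = of_int k * pi)"
proof -
  obtain m where "n = 2 * m" using assms by blast
  then have odd_sum: "(\<Sum>i\<in>{i. i < n \<and> odd i}. ext_angle n B i) = alt_sum (dir n B) n"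
    by (rule sum_odd_ext_angle)
  have "\<exists>k::int. - a = of_int k * pi" if "\<exists>k::int. a = of_int k * pi" for a :: real
    using that by (metis mult_minus_left of_int_minus)
  moreover have "holonomy = 1 \<longleftrightarrow> (\<exists>k::int. alt_sum (dir n B) n = of_int k * pi)"
    by (simp add: holonomy_eq_cis cis_double_eq_1_iff)
  ultimately show ?thesis
    unfolding sum_even_ext_angle odd_sum by blast
qed

end


theorem lemma2p2:
  fixes n :: nat and B :: "nat \<Rightarrow> complex"
  assumes "n \<ge> 2"
    and "\<forall>i<n. B i \<noteq> B (Suc i mod n)"
  shows "(odd n \<longrightarrow>
            (\<exists>u. framing n B u \<and>
               (\<forall>v. framing n B v \<longrightarrow> (\<forall>i<n. v i = u i) \<or> (\<forall>i<n. v i = - u i))))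
       \<and> (even n \<longrightarrow>
            ((\<exists>u. framing n B u) \<longleftrightarrow>
               (\<exists>k::int. (\<Sum>i\<in>{i. i < n \<and> odd i}. ext_angle n B i) = of_int k * pi) \<and>
               (\<exists>k::int. (\<Sum>i\<in>{i. i < n \<and> even i}. ext_angle n B i) = of_int k * pi))
          \<and> ((\<exists>u. framing n B u) \<longrightarrow>
               (\<forall>z. norm z = 1 \<longrightarrow>
                  (\<exists>u. framing n B u \<and> u 0 = z \<and>
                     (\<forall>v. framing n B v \<and> v 0 = z \<longrightarrow> (\<forall>i<n. v i = u i))))))"
proof -
  interpret polygon n B
  proof
    show "0 < n" using assms(1) by simp
    show "side n B i \<noteq> 0" if "i < n" for i
      using assms(2) that by (auto simp: side_def)
  qed
  show ?thesis
  proof (intro conjI impI)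
    assume "odd n"
    then show "\<exists>u. framing n B u \<and> (\<forall>v. framing n B v \<longrightarrow> (\<forall>i<n. v i = u i) \<or> (\<forall>i<n. v i = - u i))"
      by (rule framing_odd_unique)
  next
    assume "even n"
    then show "(\<exists>u. framing n B u) \<longleftrightarrow>
               (\<exists>k::int. (\<Sum>i\<in>{i. i < n \<and> odd i}. ext_angle n B i) = of_int k * pi) \<and>
               (\<exists>k::int. (\<Sum>i\<in>{i. i < n \<and> even i}. ext_angle n B i) = of_int k * pi)"
      by (simp add: framing_exists_iff_even holonomy_eq_1_iff_even)
  next
    assume "even n" and "\<exists>u. framing n B u"
    then show "\<forall>z. norm z = 1 \<longrightarrow> (\<exists>u. framing n B u \<and> u 0 = z \<and>
                  (\<forall>v. framing n B v \<and> v 0 = z \<longrightarrow> (\<forall>i<n. v i = u i)))"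
      using framing_exists_iff_even framing_even_unique by blast
  qed
qed

end
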